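(* There is an equality $(\Theta\otimes\mathbb C)\setminus\mathcal H_{\mathbb C}=\bigcup_{L\in\operatorname{Mut}_0(N)}\varphi_L(\mathbb H_+)$, and the union on the right is disjoint.
   Context: $R$ is a three-dimensional complete local Gorenstein normal $\mathbb C$-algebra with an isolated cDV singularity; $f\colon X\to\operatorname{Spec}R$ a flopping contraction ($X$ Gorenstein terminal) with $n$ exceptional curves; $N=R\oplus N_1\oplus\dots\oplus N_n$ the push-forward of the standard Van den Bergh tilting bundle. Mutation: for modifying $L=\bigoplus_{j=0}^nL_j$ and index $i$, $\nu_iL$ is the Iyama–Wemyss mutation replacing the $i$th summand; $\operatorname{Mut}_0(N)$ is the set of iterated mutations of $N$ never mutating at index $0$ (where $N_0=R$). For $L\in\operatorname{Mut}_0(N)$, $\mathcal K_L=K_0(\operatorname{per}\operatorname{End}_R(L))=\bigoplus_{j=0}^n\mathbb Z[P_j]$ with $P_j=\operatorname{Hom}_R(L,L_j)$, $\Theta_L=\mathcal K_L/\mathbb Z[P_0]$ with basis $[P_1],\dots,[P_n]$, $\Theta=\Theta_N$. Mutation functors $\mathbf R\operatorname{Hom}(\operatorname{Hom}_R(L,\nu_iL),-)$ for $i\ne0$ induce isomorphisms $\Theta_L\to\Theta_{\nu_iL}$, and $\varphi_L\colon\Theta_L\otimes\mathbb C\to\Theta\otimes\mathbb C$ is induced by a shortest walk from $L$ to $N$ inside $\operatorname{Mut}_0(N)$ (independent of the choice). With $C_+$ the open positive orthant, the cones $\varphi_L(C_+)$, $L\in\operatorname{Mut}_0(N)$, are the chambers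 of a finite simplicial real hyperplane arrangement $\mathcal H$ in $\Theta\otimes\mathbb R$; $\mathcal H_{\mathbb C}=\bigcup_{H\in\mathcal H}H\otimes\mathbb C$. $\mathbb H=\{re^{\mathrm i\pi\theta}:r>0,0<\theta\le1\}$ is the semi-closed upper half plane and $\mathbb H_+=\{z\in\Theta_L\otimes\mathbb C: z_j\in\mathbb H\text{ for all }1\le j\le n\}$. *)

theory Defs
  imports "HOL-Analysis.Analysis"
begin

text \<open>Theta (x) R is modelled as real^'n (coordinates w.r.t. the basis [P_1],...,[P_n]),
  Theta (x) C as complex^'n.  A linear map Theta_L (x) R -> Theta (x) R is given by its
  real matrix; its complexification acts on complex^'n.\<close>

definition complexify :: "real^'n^'n \<Rightarrow> complex^'n \<Rightarrow> complex^'n" where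
  "complexify M z = (\<chi> i. \<Sum>j\<in>UNIV. complex_of_real (M $ i $ j) * z $ j)"

definition pos_orthant :: "(real^'n) set" where
  "pos_orthant = {x. \<forall>j. 0 < x $ j}"

definition semi_upper_half_plane :: "complex set" where
  "semi_upper_half_plane =
     {z. \<exists>r \<theta>. 0 < r \<and> 0 < \<theta> \<and> \<theta> \<le> 1 \<and> z = complex_of_real r * exp (\<i> * complex_of_real (pi * \<theta>))}"

definition H_plus :: "(complex^'n) set" where
  "H_plus = {z. \<forall>j. z $ j \<in> semi_upper_half_plane}"

text \<open>A (central) real hyperplane arrangement is given by a finite set A of nonzero normal
  vectors; the hyperplane of a is {x. a \<bullet> x = 0}.\<close>
definition real_hyperplane :: "real^'n \<Rightarrow> (real^'n) set" where
  "real_hyperplane a = {x. a \<bullet> x = 0}"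

definition complex_hyperplane :: "real^'n \<Rightarrow> (complex^'n) set" where
  "complex_hyperplane a = {z. (\<Sum>j\<in>UNIV. complex_of_real (a $ j) * z $ j) = 0}"

definition chambers :: "(real^'n) set \<Rightarrow> (real^'n) set set" where
  "chambers A = components (UNIV - (\<Union>a\<in>A. real_hyperplane a))"

definition simplicial_arrangement :: "(real^'n) set \<Rightarrow> bool" where
  "simplicial_arrangement A \<longleftrightarrow>
     (\<forall>C\<in>chambers A. \<exists>M::real^'n^'n. invertible M \<and> C = (\<lambda>x. M *v x) ` pos_orthant)"

end

theory Submission imports Defs begin

text \<open>Write a point of \<open>\<Theta> \<otimes> \<complex>\<close> as \<open>z = x + i y\<close> with \<open>x, y\<close> real. A number lies in the
  semi-closed upper half plane iff \<open>Im c - \<epsilon> Re c > 0\<close> for all small \<open>\<epsilon> > 0\<close>; hence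
  \<open>z \<in> \<phi>\<^sub>L(\<bbbH>\<^sub>+)\<close> iff the real path \<open>y - \<epsilon> x\<close> eventually lies in the chamber \<open>\<phi>\<^sub>L(C\<^sub>+)\<close>.
  The same path eventually avoids every real hyperplane iff \<open>z\<close> avoids every complexified one,
  and being connected it then eventually stays in a single chamber. Disjointness follows
  because two chambers meeting along the path coincide.\<close>

definition vec_Re :: "complex^'n \<Rightarrow> real^'n" where
  "vec_Re z = (\<chi> j. Re (z $ j))"

definition vec_Im :: "complex^'n \<Rightarrow> real^'n" where
  "vec_Im z = (\<chi> j. Im (z $ j))"

text \<open>\<open>rotated_Im z \<epsilon>\<close> is the imaginary part of \<open>(1 - i\<epsilon>) z\<close>, i.e. of \<open>z\<close> rotated slightly clockwise.\<close>

definition rotated_Im :: "complex^'n \<Rightarrow> real \<Rightarrow> real^'n" where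
  "rotated_Im z e = vec_Im z - e *\<^sub>R vec_Re z"

lemma complex_vec_eq_iff: "z = w \<longleftrightarrow> vec_Re z = vec_Re w \<and> vec_Im z = vec_Im w"
  by (auto simp: vec_Re_def vec_Im_def vec_eq_iff complex_eq_iff)

lemma vec_Re_complexify: "vec_Re (complexify M z) = M *v vec_Re z"
  by (simp add: vec_Re_def complexify_def vec_eq_iff matrix_vector_mult_def Re_sum)

lemma vec_Im_complexify: "vec_Im (complexify M z) = M *v vec_Im z"
  by (simp add: vec_Im_def complexify_def vec_eq_iff matrix_vector_mult_def Im_sum)

lemma complexify_complexify: "complexify M (complexify N z) = complexify (M ** N) z"
  by (simp add: complex_vec_eq_iff vec_Re_complexify vec_Im_complexify matrix_vector_mul_assoc)

lemma complexify_mat_1: "complexify (mat 1) z = z"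
  by (simp add: complex_vec_eq_iff vec_Re_complexify vec_Im_complexify)

lemma complex_hyperplane_iff:
  "z \<in> complex_hyperplane a \<longleftrightarrow> a \<bullet> vec_Re z = 0 \<and> a \<bullet> vec_Im z = 0"
  by (simp add: complex_hyperplane_def complex_eq_iff Re_sum Im_sum inner_vec_def vec_Re_def vec_Im_def)

lemma semi_upper_half_plane_iff: "c \<in> semi_upper_half_plane \<longleftrightarrow> 0 < Im c \<or> (Im c = 0 \<and> Re c < 0)"
proof
  assume "c \<in> semi_upper_half_plane"
  then obtain r t where rt: "0 < r" "0 < t" "t \<le> 1"
    and c: "c = complex_of_real r * exp (\<i> * complex_of_real (pi * t))"
    unfolding semi_upper_half_plane_def by blast
  have exp_eq: "exp (\<i> * complex_of_real (pi * t)) = Complex (cos (pi * t)) (sin (pi * t))"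
    by (simp add: exp_eq_polar cis.ctr)
  show "0 < Im c \<or> (Im c = 0 \<and> Re c < 0)"
  proof (cases "t = 1")
    case False
    then have "sin (pi * t) > 0" using rt by (intro sin_gt_zero) auto
    then show ?thesis using rt c exp_eq by simp
  qed (use rt c exp_eq in simp)
next
  assume c: "0 < Im c \<or> (Im c = 0 \<and> Re c < 0)"
  then have "c \<noteq> 0" by auto
  moreover have "0 < Arg c" "Arg c \<le> pi"
    using c Arg_lt_pi[of c] Arg_eq_pi[of c] Arg_le_pi[of c] by auto
  ultimately show "c \<in> semi_upper_half_plane"
    unfolding semi_upper_half_plane_def
    by (intro CollectI exI[of _ "norm c"] exI[of _ "Arg c / pi"]) (use Arg_eq[of c] in auto)
qed

lemma semi_upper_half_plane_iff_eventually:
  "c \<in> semi_upper_half_plane \<longleftrightarrow> eventually (\<lambda>e. 0 < Im c - e * Re c) (at_right (0::real))"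
proof -
  have "((\<lambda>e. Im c - e * Re c) \<longlongrightarrow> Im c - 0 * Re c) (at_right (0::real))"
    by (intro tendsto_intros)
  then have lim: "((\<lambda>e. Im c - e * Re c) \<longlongrightarrow> Im c) (at_right (0::real))"
    by simp
  show ?thesis
  proof
    assume "c \<in> semi_upper_half_plane"
    then consider "0 < Im c" | "Im c = 0" "Re c < 0" by (auto simp: semi_upper_half_plane_iff)
    then show "eventually (\<lambda>e. 0 < Im c - e * Re c) (at_right 0)"
    proof cases
      case 1
      then show ?thesis using order_tendstoD(1)[OF lim] by blast
    next
      case 2
      then show ?thesis by (auto simp: eventually_at_right_field intro!: exI[of _ 1] mult_pos_neg)
    qed
  next
    assume ev: "eventually (\<lambda>e. 0 < Im c - e * Re c) (at_right 0)"
    have "0 \<le> Im c"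
      using tendsto_lowerbound[OF lim eventually_mono[OF ev less_imp_le]] by simp
    moreover obtain e :: real where "0 < e" "0 < Im c - e * Re c"
      using eventually_happens'[OF _ eventually_conj[OF eventually_at_right_less ev]] by auto
    ultimately show "c \<in> semi_upper_half_plane"
      by (auto simp: semi_upper_half_plane_iff mult_less_0_iff)
  qed
qed

lemma H_plus_iff_eventually:
  "w \<in> H_plus \<longleftrightarrow> eventually (\<lambda>e. rotated_Im w e \<in> pos_orthant) (at_right 0)"
  by (simp add: H_plus_def pos_orthant_def rotated_Im_def vec_Re_def vec_Im_def
      semi_upper_half_plane_iff_eventually eventually_ball_finite_distrib[of UNIV, simplified, symmetric])

lemma complexify_image_H_plus_iff:
  assumes "invertible M"
  shows "z \<in> complexify M ` H_plus \<longleftrightarrow>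
    eventually (\<lambda>e. rotated_Im z e \<in> (\<lambda>x. M *v x) ` pos_orthant) (at_right 0)"
proof
  assume "z \<in> complexify M ` H_plus"
  then obtain w where w: "w \<in> H_plus" and z: "z = complexify M w" by blast
  have "rotated_Im z e = M *v rotated_Im w e" for e
    by (simp add: z rotated_Im_def vec_Re_complexify vec_Im_complexify algebra_simps)
  then show "eventually (\<lambda>e. rotated_Im z e \<in> (\<lambda>x. M *v x) ` pos_orthant) (at_right 0)"
    using w by (auto simp: H_plus_iff_eventually elim!: eventually_mono)
next
  assume ev: "eventually (\<lambda>e. rotated_Im z e \<in> (\<lambda>x. M *v x) ` pos_orthant) (at_right 0)"
  obtain B where MB: "M ** B = mat 1" and BM: "B ** M = mat 1"
    using assms unfolding invertible_def by blast
  define w where "w = complexify B z"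
  have z: "z = complexify M w"
    by (simp add: w_def complexify_complexify MB complexify_mat_1)
  have "rotated_Im w e = B *v rotated_Im z e" for e
    by (simp add: w_def rotated_Im_def vec_Re_complexify vec_Im_complexify algebra_simps)
  then have "w \<in> H_plus"
    using ev by (auto simp: H_plus_iff_eventually matrix_vector_mul_assoc BM elim!: eventually_mono)
  then show "z \<in> complexify M ` H_plus" using z by blast
qed

lemma notin_complex_hyperplanes_iff:
  assumes "finite A"
  shows "z \<notin> (\<Union>a\<in>A. complex_hyperplane a) \<longleftrightarrow>
    eventually (\<lambda>e. rotated_Im z e \<notin> (\<Union>a\<in>A. real_hyperplane a)) (at_right 0)"
proof -
  have "z \<notin> complex_hyperplane a \<longleftrightarrow>
      eventually (\<lambda>e. a \<bullet> vec_Im z - e * (a \<bullet> vec_Re z) \<noteq> 0) (at_right (0::real))" for a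
  proof (cases "a \<bullet> vec_Im z = 0")
    case True
    then show ?thesis
      by (auto simp: complex_hyperplane_iff intro: eventually_mono[OF eventually_at_right_less])
  next
    case False
    have "((\<lambda>e. a \<bullet> vec_Im z - e * (a \<bullet> vec_Re z)) \<longlongrightarrow> a \<bullet> vec_Im z - 0 * (a \<bullet> vec_Re z))
        (at_right (0::real))"
      by (intro tendsto_intros)
    then show ?thesis
      using False tendsto_imp_eventually_ne by (fastforce simp: complex_hyperplane_iff)
  qed
  then show ?thesis
    using assms
    by (simp add: rotated_Im_def real_hyperplane_def inner_diff_right eventually_ball_finite_distrib)
qed

lemma eventually_at_right_in_components_iff:
  fixes f :: "real \<Rightarrow> 'a::real_normed_vector"
  assumes f: "continuous_on {a<..} f"
  shows "eventually (\<lambda>t. f t \<in> S) (at_right a) \<longleftrightarrow>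
    (\<exists>C\<in>components S. eventually (\<lambda>t. f t \<in> C) (at_right a))"
proof
  assume "eventually (\<lambda>t. f t \<in> S) (at_right a)"
  then obtain b where "a < b" and b: "\<And>t. a < t \<Longrightarrow> t < b \<Longrightarrow> f t \<in> S"
    unfolding eventually_at_right_field by blast
  define m where "m = (a + b) / 2"
  have m: "m \<in> {a<..<b}" using \<open>a < b\<close> by (simp add: m_def)
  have "connected (f ` {a<..<b})"
    using f by (intro connected_continuous_image) (auto elim: continuous_on_subset)
  moreover have "f ` {a<..<b} \<subseteq> S" using b by auto
  ultimately have path_in: "f ` {a<..<b} \<subseteq> connected_component_set S (f m)"
    using m by (intro connected_component_maximal) auto
  have "connected_component_set S (f m) \<in> components S"
    using m b by (intro componentsI) simp
  moreover have "eventually (\<lambda>t. f t \<in> connected_component_set S (f m)) (at_right a)"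
    unfolding eventually_at_right_field
    using \<open>a < b\<close> path_in by (intro exI[of _ b]) (auto simp: image_subset_iff)
  ultimately show "\<exists>C\<in>components S. eventually (\<lambda>t. f t \<in> C) (at_right a)" by blast
next
  assume "\<exists>C\<in>components S. eventually (\<lambda>t. f t \<in> C) (at_right a)"
  then obtain C where "C \<in> components S" "eventually (\<lambda>t. f t \<in> C) (at_right a)" by blast
  then show "eventually (\<lambda>t. f t \<in> S) (at_right a)"
    using in_components_subset by (auto elim!: eventually_mono)
qed

lemma eventually_in_components_unique:
  assumes "C \<in> components S" "C' \<in> components S" "F \<noteq> bot"
    and "eventually (\<lambda>x. f x \<in> C) F" "eventually (\<lambda>x. f x \<in> C') F"
  shows "C = C'"
proof -
  obtain x where "f x \<in> C \<inter> C'"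
    using eventually_happens'[OF assms(3) eventually_conj[OF assms(4,5)]] by blast
  then show ?thesis using components_nonoverlap[OF assms(1,2)] by blast
qed

lemma notin_complex_hyperplanes_iff_chambers:
  assumes "finite A"
  shows "z \<notin> (\<Union>a\<in>A. complex_hyperplane a) \<longleftrightarrow>
    (\<exists>K\<in>chambers A. eventually (\<lambda>e. rotated_Im z e \<in> K) (at_right 0))"
proof -
  have "continuous_on {0<..} (rotated_Im z)"
    unfolding rotated_Im_def by (intro continuous_intros)
  then show ?thesis
    using notin_complex_hyperplanes_iff[OF assms, of z]
      eventually_at_right_in_components_iff[of 0 "rotated_Im z" "UNIV - (\<Union>a\<in>A. real_hyperplane a)"]
    by (simp add: chambers_def)
qed

theorem proposition3p10:
  fixes Mut0 :: "'l set"
    and phi :: "'l \<Rightarrow> real^'n^'n"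
    and A :: "(real^'n) set"
  assumes A_finite: "finite A"
    and A_nonzero: "\<forall>a\<in>A. a \<noteq> 0"
    and A_simplicial: "simplicial_arrangement A"
    and phi_iso: "\<forall>L\<in>Mut0. invertible (phi L)"
    and chambers_eq: "(\<lambda>L. (\<lambda>x. phi L *v x) ` pos_orthant) ` Mut0 = chambers A"
    and chambers_inj: "inj_on (\<lambda>L. (\<lambda>x. phi L *v x) ` pos_orthant) Mut0"
  shows "UNIV - (\<Union>a\<in>A. complex_hyperplane a) = (\<Union>L\<in>Mut0. complexify (phi L) ` H_plus)
         \<and> disjoint_family_on (\<lambda>L. complexify (phi L) ` H_plus) Mut0"
proof -
  define C where "C = (\<lambda>L. (\<lambda>x. phi L *v x) ` pos_orthant)"
  have image_H_plus_iff: "z \<in> complexify (phi L) ` H_plus \<longleftrightarrow>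
      eventually (\<lambda>e. rotated_Im z e \<in> C L) (at_right 0)" if "L \<in> Mut0" for L z
    using phi_iso that by (simp add: complexify_image_H_plus_iff C_def)
  have "z \<in> UNIV - (\<Union>a\<in>A. complex_hyperplane a) \<longleftrightarrow> z \<in> (\<Union>L\<in>Mut0. complexify (phi L) ` H_plus)"
    for z
  proof -
    have "z \<in> UNIV - (\<Union>a\<in>A. complex_hyperplane a) \<longleftrightarrow>
        (\<exists>L\<in>Mut0. eventually (\<lambda>e. rotated_Im z e \<in> C L) (at_right 0))"
      using notin_complex_hyperplanes_iff_chambers[OF A_finite] by (simp add: chambers_eq[symmetric] C_def)
    also have "\<dots> \<longleftrightarrow> z \<in> (\<Union>L\<in>Mut0. complexify (phi L) ` H_plus)"
      unfolding UN_iff by (rule bex_cong[OF refl]) (simp only: image_H_plus_iff)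
    finally show ?thesis .
  qed
  then have "UNIV - (\<Union>a\<in>A. complex_hyperplane a) = (\<Union>L\<in>Mut0. complexify (phi L) ` H_plus)"
    by (rule set_eqI)
  moreover have "disjoint_family_on (\<lambda>L. complexify (phi L) ` H_plus) Mut0"
    unfolding disjoint_family_on_def
  proof (intro ballI impI, rule ccontr)
    fix L L' assume L: "L \<in> Mut0" "L' \<in> Mut0" "L \<noteq> L'"
      and "complexify (phi L) ` H_plus \<inter> complexify (phi L') ` H_plus \<noteq> {}"
    then obtain z where "z \<in> complexify (phi L) ` H_plus" "z \<in> complexify (phi L') ` H_plus"
      by (meson ex_in_conv IntD1 IntD2)
    then have "eventually (\<lambda>e. rotated_Im z e \<in> C L) (at_right 0)"
      "eventually (\<lambda>e. rotated_Im z e \<in> C L') (at_right 0)"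
      using image_H_plus_iff L(1,2) by blast+
    moreover have "C L \<in> chambers A" "C L' \<in> chambers A"
      using chambers_eq L(1,2) by (auto simp: C_def)
    ultimately have "C L = C L'"
      unfolding chambers_def by (intro eventually_in_components_unique[OF _ _ trivial_limit_at_right_real])
    then show False using inj_on_eq_iff[OF chambers_inj L(1,2)] L(3) by (simp add: C_def)
  qed
  ultimately show ?thesis ..
qed

end
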